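(* Let $S\in\mathrm{End}(V)$ be a linear map with operator norm $\|S\|<1$. For $w\in\widehat W$ let $V_w^{(S)}=(S-w)(A)=\{Sx-w(x)\mid x\in A\}$. Then the sets $V_w^{(S)}$, $w\in\widehat W$, are pairwise disjoint, and their closures cover $V$: \[V=\bigcup_{w\in\widehat W}\overline{V_w^{(S)}}.\]
   Context: $(V,\langle\cdot,\cdot\rangle)$ is a finite-dimensional real Euclidean vector space and $W$ is an irreducible Weyl group acting on $V$ as a crystallographic reflection group, with simple roots $\alpha_1,\dots,\alpha_l$ ($l=\dim V$), highest root $\alpha_{\max}$, $\alpha_0:=-\alpha_{\max}$, and $\alpha^\vee=2\alpha/\langle\alpha,\alpha\rangle$. The open Weyl alcove is $A=\{x\in V\mid\langle\alpha_i,x\rangle+\delta_{i,0}>0,\ i=0,\dots,l\}$. The affine Weyl group $\widehat W$ is the group of affine transformations generated by $s_i(x)=x-(\langle\alpha_i,x\rangle+\delta_{i,0})\alpha_i^\vee$, $i=0,\dots,l$; equivalently $\widehat W=\Lambda\rtimes W$ with $\Lambda=\mathbb Z[\alpha_1^\vee,\dots,\alpha_l^\vee]$ acting by translations. *)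

theory Defs
  imports "HOL-Analysis.Analysis"
begin

definition refl :: "'a::real_inner \<Rightarrow> 'a \<Rightarrow> 'a" where
  "refl a x = x - (2 * (a \<bullet> x) / (a \<bullet> a)) *\<^sub>R a"

definition coroot :: "'a::real_inner \<Rightarrow> 'a" where
  "coroot a = (2 / (a \<bullet> a)) *\<^sub>R a"

definition root_system :: "'a::euclidean_space set \<Rightarrow> bool" where
  "root_system R \<longleftrightarrow> finite R \<and> 0 \<notin> R \<and> span R = UNIV \<and>
     (\<forall>a\<in>R. refl a ` R \<subseteq> R) \<and>
     (\<forall>a\<in>R. \<forall>b\<in>R. 2 * (a \<bullet> b) / (b \<bullet> b) \<in> \<int>) \<and>
     (\<forall>a\<in>R. \<forall>c::real. c *\<^sub>R a \<in> R \<longrightarrow> c = 1 \<or> c = -1)"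

definition irreducible_rs :: "'a::euclidean_space set \<Rightarrow> bool" where
  "irreducible_rs R \<longleftrightarrow> \<not> (\<exists>R1 R2. R1 \<noteq> {} \<and> R2 \<noteq> {} \<and> R = R1 \<union> R2 \<and>
       (\<forall>a\<in>R1. \<forall>b\<in>R2. a \<bullet> b = 0))"

definition simple_roots :: "'a::euclidean_space set \<Rightarrow> nat \<Rightarrow> (nat \<Rightarrow> 'a) \<Rightarrow> bool" where
  "simple_roots R l alpha \<longleftrightarrow> (\<forall>i\<in>{1..l}. alpha i \<in> R) \<and> inj_on alpha {1..l} \<and>
     independent (alpha ` {1..l}) \<and>
     (\<forall>b\<in>R. \<exists>c::nat \<Rightarrow> int. b = (\<Sum>i=1..l. of_int (c i) *\<^sub>R alpha i) \<and>
        ((\<forall>i. c i \<ge> 0) \<or> (\<forall>i. c i \<le> 0)))"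

definition highest_root :: "'a::euclidean_space set \<Rightarrow> nat \<Rightarrow> (nat \<Rightarrow> 'a) \<Rightarrow> 'a \<Rightarrow> bool" where
  "highest_root R l alpha amax \<longleftrightarrow> amax \<in> R \<and>
     (\<forall>b\<in>R. \<exists>c::nat \<Rightarrow> nat. amax - b = (\<Sum>i=1..l. of_nat (c i) *\<^sub>R alpha i))"

definition aff_refl :: "'a::real_inner \<Rightarrow> real \<Rightarrow> 'a \<Rightarrow> 'a" where
  "aff_refl a k x = x - (a \<bullet> x + k) *\<^sub>R coroot a"

text \<open>Generators s_0, ..., s_l (alpha 0 = - highest root).\<close>
definition sgen :: "(nat \<Rightarrow> 'a::real_inner) \<Rightarrow> nat \<Rightarrow> 'a \<Rightarrow> 'a" where
  "sgen alpha i = aff_refl (alpha i) (if i = 0 then 1 else 0)"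

text \<open>The affine Weyl group: the group generated by s_0..s_l
  (each s_i is an involution, so the generated monoid is the generated group).\<close>
inductive_set affine_weyl :: "(nat \<Rightarrow> 'a::real_inner) \<Rightarrow> nat \<Rightarrow> ('a \<Rightarrow> 'a) set"
  for alpha :: "nat \<Rightarrow> 'a" and l :: nat where
  id_in: "id \<in> affine_weyl alpha l"
| gen: "w \<in> affine_weyl alpha l \<Longrightarrow> i \<le> l \<Longrightarrow> sgen alpha i \<circ> w \<in> affine_weyl alpha l"

definition alcove :: "(nat \<Rightarrow> 'a::real_inner) \<Rightarrow> nat \<Rightarrow> 'a set" where
  "alcove alpha l = {x. \<forall>i\<le>l. alpha i \<bullet> x + (if i = 0 then 1 else 0) > 0}"

end

theory Submission
  imports Defs
begin

(*
  Let W be the affine Weyl group generated by the affine reflections s_0, ..., s_l, let A be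
  the open alcove and C = {x. <alpha_i, x> + delta_i0 >= 0 for all i} its closure.  The proof
  rests on two classical facts about the action of W on V:

  (K) Key inequality: for x, y in C and every w in W,  |x - y| <= |w x - y|.
      Write w = s_i1 ... s_ik as a reduced word.  By the exchange property, w maps C to the
      non-positive side of the wall of s_i1; reflecting in that wall moves w x closer to y,
      and we conclude by induction on k.
  (F) Fundamental domain: every z in V is w x for some w in W and x in C.  While z has a
      negative wall value we reflect it; this decreases the (finite) number of affine root
      hyperplanes separating z from A.

  Disjointness: if S x1 - w1 x1 = S x2 - w2 x2 with x1, x2 in A, then by (K)
  |x1 - x2| <= |w1 x1 - w2 x2| = |S (x1 - x2)| <= |S| |x1 - x2|, so x1 = x2, and w2^-1 w1
  fixes a point of A, whence w1 = w2.  Covering: by (F) and (K) the folding map F : V -> C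
  (F (w x) = x) is 1-Lipschitz, so z |-> S (F z) - y is a contraction; its fixed point
  z = w x (x in C) gives y = S x - w x, a point of the closure of (S - w)(A).

  The exchange property needs, for each wall, a point of A whose mirror image in that wall
  is separated from it by no other hyperplane; it is built from the fundamental coweights.
*)

section \<open>Words in the generators\<close>

primrec word_map :: "(nat \<Rightarrow> 'a::real_inner) \<Rightarrow> nat list \<Rightarrow> 'a \<Rightarrow> 'a" where
  "word_map alpha [] = id"
| "word_map alpha (i # ws) = sgen alpha i \<circ> word_map alpha ws"

lemma word_map_append: "word_map alpha (xs @ ys) = word_map alpha xs \<circ> word_map alpha ys"
  by (induction xs) auto

lemma affine_weyl_iff_word:
  "w \<in> affine_weyl alpha l \<longleftrightarrow> (\<exists>ws. set ws \<subseteq> {..l} \<and> w = word_map alpha ws)"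
proof
  assume "w \<in> affine_weyl alpha l"
  then show "\<exists>ws. set ws \<subseteq> {..l} \<and> w = word_map alpha ws"
  proof induction
    case id_in
    show ?case by (intro exI[of _ "[]"]) auto
  next
    case (gen w i)
    then obtain ws where "set ws \<subseteq> {..l}" "w = word_map alpha ws" by blast
    with gen show ?case by (intro exI[of _ "i # ws"]) auto
  qed
next
  assume "\<exists>ws. set ws \<subseteq> {..l} \<and> w = word_map alpha ws"
  then obtain ws where ws: "set ws \<subseteq> {..l}" "w = word_map alpha ws" by blast
  have "word_map alpha ws \<in> affine_weyl alpha l" using ws(1)
    by (induction ws) (auto intro: affine_weyl.intros)
  with ws show "w \<in> affine_weyl alpha l" by simp
qed

section \<open>Affine isometries and affine reflections\<close>

definition affine_isometry :: "('a::real_inner \<Rightarrow> 'a) \<Rightarrow> bool" where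
  "affine_isometry f \<longleftrightarrow> (\<exists>L. linear L \<and> (\<forall>v w. L v \<bullet> L w = v \<bullet> w) \<and> (\<forall>y v. f (y + v) = f y + L v))"

lemma affine_isometry_id: "affine_isometry id"
  unfolding affine_isometry_def by (intro exI[of _ id]) (auto simp: linear_id)

lemma affine_isometry_comp:
  assumes "affine_isometry f" "affine_isometry g"
  shows "affine_isometry (f \<circ> g)"
proof -
  obtain L where L: "linear L" "\<forall>v w. L v \<bullet> L w = v \<bullet> w" "\<forall>y v. f (y + v) = f y + L v"
    using assms(1) unfolding affine_isometry_def by blast
  obtain M where M: "linear M" "\<forall>v w. M v \<bullet> M w = v \<bullet> w" "\<forall>y v. g (y + v) = g y + M v"
    using assms(2) unfolding affine_isometry_def by blast
  show ?thesis unfolding affine_isometry_def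
    by (intro exI[of _ "L \<circ> M"]) (use L M linear_compose in auto)
qed

lemma affine_isometry_dist:
  assumes "affine_isometry f" shows "dist (f x) (f y) = dist x y"
proof -
  obtain L where L: "\<forall>v w. L v \<bullet> L w = v \<bullet> w" "\<forall>y v. f (y + v) = f y + L v"
    using assms unfolding affine_isometry_def by blast
  have "f x = f y + L (x - y)" using L(2)[rule_format, of y "x - y"] by simp
  then have "dist (f x) (f y) = norm (L (x - y))" by (simp add: dist_norm)
  also have "\<dots> = norm (x - y)" using L(1) by (simp add: norm_eq_sqrt_inner)
  finally show ?thesis by (simp add: dist_norm)
qed

lemma affine_isometry_continuous:
  assumes "affine_isometry f" shows "continuous_on UNIV f"
  by (rule lipschitz_on_continuous_on[of 1], rule lipschitz_onI)
     (auto simp: affine_isometry_dist[OF assms])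

lemma affine_isometry_aff_refl:
  fixes a :: "'a::real_inner"
  assumes "a \<noteq> 0" shows "affine_isometry (aff_refl a k)"
proof -
  let ?M = "\<lambda>v. v - (a \<bullet> v) *\<^sub>R coroot a"
  have "linear ?M" by (auto intro!: linearI simp: inner_add_right scaleR_add_left algebra_simps)
  moreover have "?M v \<bullet> ?M w = v \<bullet> w" for v w
    using assms by (simp add: coroot_def inner_diff_left inner_diff_right inner_commute field_simps)
  moreover have "aff_refl a k (y + v) = aff_refl a k y + ?M v" for y v
    by (simp add: aff_refl_def inner_add_right algebra_simps)
  ultimately show ?thesis unfolding affine_isometry_def by blast
qed

lemma aff_refl_value:
  fixes a :: "'a::real_inner"
  assumes "a \<noteq> 0" shows "a \<bullet> aff_refl a k x + k = - (a \<bullet> x + k)"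
proof -
  have "a \<bullet> a > 0" using assms by simp
  then show ?thesis by (simp add: aff_refl_def coroot_def inner_diff_right field_simps)
qed

lemma aff_refl_involution:
  fixes a :: "'a::real_inner"
  assumes "a \<noteq> 0" shows "aff_refl a k (aff_refl a k x) = x"
proof -
  have "aff_refl a k (aff_refl a k x) = aff_refl a k x + (a \<bullet> x + k) *\<^sub>R coroot a"
    unfolding aff_refl_def[of a k "aff_refl a k x"] aff_refl_value[OF assms] scaleR_minus_left
    by simp
  then show ?thesis by (simp add: aff_refl_def)
qed

lemma aff_refl_dist_le:
  fixes a :: "'a::real_inner"
  assumes a: "a \<noteq> 0" and z: "a \<bullet> z + k \<le> 0" and x: "a \<bullet> x + k \<ge> 0"
  shows "dist (aff_refl a k z) x \<le> dist z x"
proof -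
  define c where "c = a \<bullet> z + k"
  define d where "d = a \<bullet> x + k"
  have pos: "a \<bullet> a > 0" using a by simp
  have zx: "(z - x) \<bullet> coroot a = 2 / (a \<bullet> a) * (c - d)"
    by (simp add: coroot_def c_def d_def inner_diff_left inner_diff_right inner_commute)
  have cc: "coroot a \<bullet> coroot a = 4 / (a \<bullet> a)"
    using pos by (simp add: coroot_def power2_eq_square)
  have e: "aff_refl a k z - x = (z - x) - c *\<^sub>R coroot a" by (simp add: aff_refl_def c_def)
  have "(aff_refl a k z - x) \<bullet> (aff_refl a k z - x)
      = (z - x) \<bullet> (z - x) - 2 * c * ((z - x) \<bullet> coroot a) + c * c * (coroot a \<bullet> coroot a)"
    unfolding e by (simp add: inner_diff_left inner_diff_right inner_commute algebra_simps)
  also have "\<dots> = (z - x) \<bullet> (z - x) + 4 * (c * d) / (a \<bullet> a)"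
    unfolding zx cc using pos by (simp add: field_simps)
  also have "\<dots> \<le> (z - x) \<bullet> (z - x)"
  proof -
    have "c * d \<le> 0" using z x by (simp add: c_def d_def mult_nonpos_nonneg)
    then show ?thesis using pos by (simp add: divide_nonpos_pos)
  qed
  finally have "norm (aff_refl a k z - x) ^ 2 \<le> norm (z - x) ^ 2" by (simp add: power2_norm_eq_inner)
  then have "norm (aff_refl a k z - x) \<le> norm (z - x)" by (rule power2_le_imp_le) simp
  then show ?thesis by (simp add: dist_norm)
qed

lemma aff_refl_conjugate:
  fixes a b :: "'a::euclidean_space"
  assumes w: "affine_isometry w" and a: "a \<noteq> 0" and b: "b \<noteq> 0"
    and e: "e = 1 \<or> e = -1" and h: "\<forall>y. a \<bullet> w y + k = e * (b \<bullet> y + k')"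
  shows "aff_refl a k \<circ> w = w \<circ> aff_refl b k'"
proof -
  obtain L where L: "linear L" "\<forall>v u. L v \<bullet> L u = v \<bullet> u" "\<forall>y v. w (y + v) = w y + L v"
    using w unfolding affine_isometry_def by blast
  have wv: "w v = w 0 + L v" for v using L(3)[rule_format, of 0 v] by simp
  have aL: "a \<bullet> L v = e * (b \<bullet> v)" for v
    using h[rule_format, of v] h[rule_format, of 0] wv[of v] by (simp add: inner_add_right algebra_simps)
  have "inj L"
  proof (rule injI)
    fix u v assume "L u = L v"
    then have "L (u - v) \<bullet> L (u - v) = 0" using L(1) by (simp add: linear_diff)
    then show "u = v" using L(2) by simp
  qed
  then have "surj L" using L(1) linear_injective_imp_surjective by blast
  text \<open>Since L is orthogonal, the relation aL says that L maps b to e a.\<close>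
  obtain u where u: "L u = a - e *\<^sub>R L b" using \<open>surj L\<close> by (metis surjD)
  have "(a - e *\<^sub>R L b) \<bullet> L u = 0"
    using aL[of u] L(2) by (simp add: inner_diff_left)
  then have "a = e *\<^sub>R L b" unfolding u by simp
  then have Lb: "L b = e *\<^sub>R a" using e by auto
  have "a \<bullet> a = b \<bullet> b" using L(2)[rule_format, of b b] Lb e by auto
  then have Lc: "L (coroot b) = e *\<^sub>R coroot a"
    using Lb L(1) by (simp add: coroot_def linear_cmul)
  show ?thesis
  proof
    fix y
    have "w (aff_refl b k' y) = w y - L ((b \<bullet> y + k') *\<^sub>R coroot b)"
      using L(3)[rule_format, of y "- ((b \<bullet> y + k') *\<^sub>R coroot b)"] L(1)
      by (simp add: aff_refl_def linear_neg)
    also have "\<dots> = w y - (e * (b \<bullet> y + k')) *\<^sub>R coroot a"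
      using Lc L(1) by (simp add: linear_cmul)
    also have "\<dots> = aff_refl a k (w y)" using h by (simp add: aff_refl_def)
    finally show "(aff_refl a k \<circ> w) y = (w \<circ> aff_refl b k') y" by simp
  qed
qed

section \<open>Affine roots\<close>

text \<open>The affine function x \<mapsto> \<langle>b, x\<rangle> + m; for b a root and m an integer its zero set is a
  hyperplane of the affine arrangement on which the affine Weyl group acts.\<close>
definition aroot :: "'a::real_inner \<Rightarrow> int \<Rightarrow> 'a \<Rightarrow> real" where
  "aroot b m x = b \<bullet> x + of_int m"

text \<open>The constant term of the i-th wall: the walls of the alcove are alpha_i = 0 (i \<ge> 1)
  and alpha_0 + 1 = 0.\<close>
definition delta :: "nat \<Rightarrow> int" where
  "delta i = (if i = 0 then 1 else 0)"

lemma aroot_segment: "aroot b m (x + t *\<^sub>R (p - x)) = (1 - t) * aroot b m x + t * aroot b m p"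
  by (simp add: aroot_def inner_add_right inner_diff_right algebra_simps)

definition same_mirror :: "'a::real_inner \<Rightarrow> int \<Rightarrow> 'a \<Rightarrow> int \<Rightarrow> bool" where
  "same_mirror b m a k \<longleftrightarrow> (b = a \<and> m = k) \<or> (b = - a \<and> m = - k)"

lemma lattice_gap:
  fixes N :: real
  assumes "(z::int) \<noteq> 0" "N > 0" shows "1/N \<le> \<bar>of_int z / N\<bar>"
proof -
  have "1 \<le> \<bar>real_of_int z\<bar>" using assms(1) by linarith
  then show ?thesis using assms(2) by (simp add: abs_divide divide_right_mono)
qed

lemma aroot_scaled:
  assumes "b \<bullet> W = of_int n" "Nz \<noteq> 0"
  shows "aroot b m ((1 / of_int Nz) *\<^sub>R W) = of_int (n + m * Nz) / of_int Nz"
  using assms by (simp add: aroot_def field_simps)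

lemma aroot_perturb_sign:
  assumes "1/N \<le> \<bar>aroot b m q\<bar>" "\<bar>t * (b \<bullet> v)\<bar> < 1/N"
  shows "(aroot b m (q + t *\<^sub>R v) > 0 \<longleftrightarrow> aroot b m q > 0)"
    and "(aroot b m (q - t *\<^sub>R v) > 0 \<longleftrightarrow> aroot b m q > 0)"
  using assms by (auto simp: aroot_def inner_add_right inner_diff_right abs_if split: if_splits)

lemma small_displacement:
  fixes R :: "'a::real_inner set" and N :: real
  assumes "finite R" "N > 0"
  shows "\<exists>t>0. \<forall>b\<in>R. \<bar>t * (b \<bullet> v)\<bar> < 1/N"
proof -
  define B where "B = (\<Sum>b\<in>R. \<bar>b \<bullet> v\<bar>)"
  define t where "t = 1 / (N * (B + 1))"
  have B0: "B \<ge> 0" unfolding B_def by (intro sum_nonneg) auto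
  have t0: "t > 0" using assms(2) B0 by (simp add: t_def)
  have "\<bar>t * (b \<bullet> v)\<bar> < 1/N" if "b \<in> R" for b
  proof -
    have "\<bar>b \<bullet> v\<bar> \<le> B" unfolding B_def using that assms(1) by (intro member_le_sum) auto
    then have "t * \<bar>b \<bullet> v\<bar> \<le> t * B" using t0 by (simp add: mult_left_mono)
    also have "t * B = (B / (B + 1)) * (1 / N)" by (simp add: t_def)
    also have "\<dots> < 1 * (1 / N)" using B0 assms(2) by (intro mult_strict_right_mono) auto
    finally show ?thesis using t0 by (simp add: abs_mult)
  qed
  with t0 show ?thesis by blast
qed

lemma linear_onorm_dist:
  fixes S :: "'a::euclidean_space \<Rightarrow> 'a"
  assumes "linear S" shows "dist (S x) (S y) \<le> onorm S * dist x y"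
proof -
  have "bounded_linear S" using assms by (simp add: linear_conv_bounded_linear)
  then have "norm (S (x - y)) \<le> onorm S * norm (x - y)" by (rule onorm)
  then show ?thesis using assms by (simp add: dist_norm linear_diff)
qed

section \<open>The setting: an alcove of a root system\<close>

locale alcove_setting =
  fixes R :: "'a::euclidean_space set" and alpha :: "nat \<Rightarrow> 'a" and amax :: 'a and l :: nat
  assumes rs: "root_system R" and ldim: "l = DIM('a)"
    and sr: "simple_roots R l alpha" and hr: "highest_root R l alpha amax"
    and alpha0: "alpha 0 = - amax"
begin

abbreviation A where "A \<equiv> alcove alpha l"
abbreviation s where "s i \<equiv> sgen alpha i"
abbreviation wmap where "wmap \<equiv> word_map alpha"

abbreviation wall where "wall i \<equiv> aroot (alpha i) (delta i)"

definition C where "C = {x. \<forall>i\<le>l. wall i x \<ge> 0}"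

lemma alcove_iff: "x \<in> A \<longleftrightarrow> (\<forall>i\<le>l. wall i x > 0)"
  by (simp add: alcove_def aroot_def delta_def)

lemma alcove_subset_C: "A \<subseteq> C"
  unfolding C_def by (auto simp: alcove_iff less_imp_le)

lemma sgen_aff_refl: "s i = aff_refl (alpha i) (of_int (delta i))"
  by (simp add: sgen_def delta_def)

lemma sgen_eq: "s i x = x - wall i x *\<^sub>R coroot (alpha i)"
  by (simp add: sgen_aff_refl aff_refl_def aroot_def)

lemma root_system_facts:
  shows finite_R: "finite R" and zero_notin_R: "0 \<notin> R"
    and refl_in_R: "\<And>a b. a \<in> R \<Longrightarrow> b \<in> R \<Longrightarrow> refl a b \<in> R"
    and cartan_int: "\<And>a b. a \<in> R \<Longrightarrow> b \<in> R \<Longrightarrow> 2 * (a \<bullet> b) / (b \<bullet> b) \<in> \<int>"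
    and reduced_R: "\<And>a c. a \<in> R \<Longrightarrow> c *\<^sub>R a \<in> R \<Longrightarrow> c = 1 \<or> c = -1"
  using rs unfolding root_system_def by blast+

lemma uminus_in_R: assumes "b \<in> R" shows "- b \<in> R"
proof -
  have "b \<noteq> 0" using assms zero_notin_R by auto
  then have "refl b b = - b" by (simp add: refl_def scaleR_2)
  then show ?thesis using refl_in_R[OF assms assms] by simp
qed

lemma l_pos: "l \<ge> 1" using ldim DIM_positive by (metis One_nat_def Suc_leI)

lemma simple_root_facts:
  shows simple_in_R: "\<And>i. i \<in> {1..l} \<Longrightarrow> alpha i \<in> R" and simple_inj: "inj_on alpha {1..l}"
    and simple_indep: "independent (alpha ` {1..l})"
    and simple_coeffs: "\<And>b. b \<in> R \<Longrightarrow> \<exists>c::nat \<Rightarrow> int. b = (\<Sum>i=1..l. of_int (c i) *\<^sub>R alpha i) \<and>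
        ((\<forall>i. c i \<ge> 0) \<or> (\<forall>i. c i \<le> 0))"
  using sr unfolding simple_roots_def by blast+

lemma highest_root_facts:
  shows amax_in_R: "amax \<in> R"
    and amax_minus: "\<And>b. b \<in> R \<Longrightarrow> \<exists>c::nat \<Rightarrow> nat. amax - b = (\<Sum>i=1..l. of_nat (c i) *\<^sub>R alpha i)"
  using hr unfolding highest_root_def by blast+

text \<open>Each generator s_i is the reflection in a root: alpha_0 = - amax is a root too.\<close>
lemma alpha_in_R: "i \<le> l \<Longrightarrow> alpha i \<in> R"
  using simple_in_R[of i] alpha0 uminus_in_R[OF amax_in_R] by (cases "i = 0") auto

lemma alpha_nonzero: "i \<le> l \<Longrightarrow> alpha i \<noteq> 0"
  using alpha_in_R zero_notin_R by metis

lemma wall_sgen: "i \<le> l \<Longrightarrow> wall i (s i x) = - wall i x"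
  using aff_refl_value[OF alpha_nonzero] by (simp add: sgen_aff_refl aroot_def)

lemma sgen_sgen: "i \<le> l \<Longrightarrow> s i (s i x) = x"
  using aff_refl_involution[OF alpha_nonzero] by (simp add: sgen_aff_refl)

lemma wmap_isometry: "set ws \<subseteq> {..l} \<Longrightarrow> affine_isometry (wmap ws)"
  by (induction ws) (auto simp: affine_isometry_id sgen_aff_refl alpha_nonzero
      intro!: affine_isometry_comp affine_isometry_aff_refl)

lemma wmap_rev: "set ws \<subseteq> {..l} \<Longrightarrow> wmap (rev ws) (wmap ws x) = x"
proof (induction ws arbitrary: x)
  case (Cons i ws)
  have "wmap (rev (i # ws)) (wmap (i # ws) x) = wmap (rev ws) (s i (s i (wmap ws x)))"
    by (simp add: word_map_append)
  also have "\<dots> = x" using Cons sgen_sgen[of i] by simp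
  finally show ?case .
qed simp

lemma wmap_rev': "set ws \<subseteq> {..l} \<Longrightarrow> wmap ws (wmap (rev ws) x) = x"
  using wmap_rev[of "rev ws"] by simp

text \<open>A generator maps affine roots to affine roots: (b, m) \<circ> s_i is the affine root
  (s_i b, m - delta_i * <b, alpha_i^vee>), whose coefficient is an integer because R is
  crystallographic.\<close>
lemma aroot_sgen:
  assumes "i \<le> l" "b \<in> R"
  shows "\<exists>b'\<in>R. \<exists>m'. \<forall>x. aroot b m (s i x) = aroot b' m' x"
proof -
  let ?a = "alpha i"
  have aR: "?a \<in> R" using alpha_in_R assms by simp
  have pos: "?a \<bullet> ?a > 0" using alpha_nonzero assms by simp
  obtain k :: int where k: "2 * (b \<bullet> ?a) / (?a \<bullet> ?a) = of_int k"
    using cartan_int[OF assms(2) aR] by (auto elim: Ints_cases)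
  have "aroot b m (s i x) = aroot (refl ?a b) (m - delta i * k) x" for x
  proof -
    have "aroot b m (s i x) = b \<bullet> x - (?a \<bullet> x + of_int (delta i)) * (2 * (b \<bullet> ?a) / (?a \<bullet> ?a)) + m"
      using pos by (simp add: sgen_eq aroot_def coroot_def inner_diff_right inner_commute field_simps)
    also have "\<dots> = aroot (refl ?a b) (m - delta i * k) x"
      using pos k by (simp add: aroot_def refl_def inner_diff_left inner_diff_right inner_commute
          field_simps)
    finally show ?thesis .
  qed
  with refl_in_R[OF aR assms(2)] show ?thesis by blast
qed

lemma aroot_wmap:
  assumes "set ws \<subseteq> {..l}" "b \<in> R"
  shows "\<exists>b'\<in>R. \<exists>m'. \<forall>x. aroot b m (wmap ws x) = aroot b' m' x"
  using assms
proof (induction ws arbitrary: b m)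
  case (Cons i ws)
  obtain b1 m1 where b1: "b1 \<in> R" "\<forall>x. aroot b m (s i x) = aroot b1 m1 x"
    using aroot_sgen[of i b m] Cons.prems by auto
  obtain b2 m2 where "b2 \<in> R" "\<forall>x. aroot b1 m1 (wmap ws x) = aroot b2 m2 x"
    using Cons.IH[of b1 m1] Cons.prems b1 by auto
  with b1 show ?case by auto
qed auto

section \<open>Roots on the alcove\<close>

lemma simple_pos_on_alcove: "x \<in> A \<Longrightarrow> k \<in> {1..l} \<Longrightarrow> alpha k \<bullet> x > 0"
  using alcove_iff[of x] by (auto simp: aroot_def delta_def)

lemma amax_lt_1_on_alcove: "x \<in> A \<Longrightarrow> amax \<bullet> x < 1"
  using alcove_iff[of x] alpha0 by (auto simp: aroot_def delta_def)

lemma root_le_amax: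
  assumes "b \<in> R" "\<forall>k\<in>{1..l}. alpha k \<bullet> x \<ge> 0"
  shows "b \<bullet> x \<le> amax \<bullet> x"
proof -
  obtain c where c: "amax - b = (\<Sum>i=1..l. of_nat (c i) *\<^sub>R alpha i)"
    using amax_minus[OF assms(1)] by blast
  have "(amax - b) \<bullet> x = (\<Sum>i=1..l. of_nat (c i) * (alpha i \<bullet> x))"
    by (simp add: c inner_sum_left)
  also have "\<dots> \<ge> 0" using assms(2) by (intro sum_nonneg) auto
  finally show ?thesis by (simp add: inner_diff_left)
qed

lemma root_lt_1_on_alcove:
  assumes "b \<in> R" "x \<in> A" shows "b \<bullet> x < 1"
proof -
  have "b \<bullet> x \<le> amax \<bullet> x"
    using root_le_amax[OF assms(1)] simple_pos_on_alcove[OF assms(2)] by (simp add: less_imp_le)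
  then show ?thesis using amax_lt_1_on_alcove[OF assms(2)] by linarith
qed

lemma combination_pos_on_alcove:
  fixes d :: "nat \<Rightarrow> int"
  assumes "\<forall>i. d i \<ge> 0" "j \<in> {1..l}" "d j \<noteq> 0" "x \<in> A"
  shows "0 < (\<Sum>i=1..l. of_int (d i) * (alpha i \<bullet> x))"
proof -
  have "0 < of_int (d j) * (alpha j \<bullet> x)" using assms simple_pos_on_alcove[OF assms(4,2)]
    by (intro mult_pos_pos) (auto simp: order.strict_iff_order)
  also have "\<dots> \<le> (\<Sum>i=1..l. of_int (d i) * (alpha i \<bullet> x))"
    using assms(1,2) simple_pos_on_alcove[OF assms(4)]
    by (intro member_le_sum) (auto intro!: mult_nonneg_nonneg simp: less_imp_le)
  finally show ?thesis .
qed

lemma root_range_on_alcove: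
  assumes "b \<in> R"
  shows "(\<forall>x\<in>A. 0 < b \<bullet> x \<and> b \<bullet> x < 1) \<or> (\<forall>x\<in>A. -1 < b \<bullet> x \<and> b \<bullet> x < 0)"
proof -
  obtain c where c: "b = (\<Sum>i=1..l. of_int (c i) *\<^sub>R alpha i)"
    and sg: "(\<forall>i. c i \<ge> 0) \<or> (\<forall>i. c i \<le> 0)"
    using simple_coeffs[OF assms] by blast
  have bx: "b \<bullet> x = (\<Sum>i=1..l. of_int (c i) * (alpha i \<bullet> x))" for x
    by (simp add: c inner_sum_left)
  have "\<exists>j\<in>{1..l}. c j \<noteq> 0"
  proof (rule ccontr)
    assume "\<not> ?thesis"
    then have "b = 0" unfolding c by (intro sum.neutral) auto
    then show False using assms zero_notin_R by simp
  qed
  then obtain j where j: "j \<in> {1..l}" "c j \<noteq> 0" by blast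
  from sg show ?thesis
  proof
    assume "\<forall>i. c i \<ge> 0"
    then have "0 < b \<bullet> x" if "x \<in> A" for x
      unfolding bx using combination_pos_on_alcove j that by blast
    then show ?thesis using root_lt_1_on_alcove assms by auto
  next
    assume "\<forall>i. c i \<le> 0"
    then have "0 < (\<Sum>i=1..l. of_int (- c i) * (alpha i \<bullet> x))" if "x \<in> A" for x
      using combination_pos_on_alcove[of "\<lambda>i. - c i"] j that by simp
    then have "b \<bullet> x < 0" if "x \<in> A" for x using that unfolding bx by (simp add: sum_negf)
    moreover have "-1 < b \<bullet> x" if "x \<in> A" for x
      using root_lt_1_on_alcove[OF uminus_in_R[OF assms] that] by simp
    ultimately show ?thesis by auto
  qed
qed

text \<open>No affine root hyperplane meets the alcove: every affine root is nonzero on A and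
  has the same sign at any two of its points.\<close>
lemma aroot_sign_on_alcove:
  assumes "b \<in> R" "x \<in> A" "x' \<in> A"
  shows "aroot b m x \<noteq> 0 \<and> (aroot b m x > 0 \<longleftrightarrow> aroot b m x' > 0)"
proof -
  have bounds: "-1 < b\<bullet>x \<and> b\<bullet>x < 1 \<and> -1 < b\<bullet>x' \<and> b\<bullet>x' < 1
      \<and> (0 < b\<bullet>x \<longleftrightarrow> 0 < b\<bullet>x') \<and> b\<bullet>x \<noteq> 0"
    using root_range_on_alcove[OF assms(1)] assms(2,3) by fastforce
  consider "real_of_int m \<ge> 1" | "real_of_int m \<le> -1" | "m = 0" by linarith
  then show ?thesis
    by cases (use bounds in \<open>simp_all add: aroot_def; linarith\<close>)+
qed

lemma aroot_wmap_sign_on_alcove: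
  assumes "set ws \<subseteq> {..l}" "b \<in> R" "x \<in> A" "x' \<in> A"
  shows "aroot b m (wmap ws x) \<noteq> 0 \<and> (aroot b m (wmap ws x) > 0 \<longleftrightarrow> aroot b m (wmap ws x') > 0)"
proof -
  obtain b' m' where "b' \<in> R" "\<forall>x. aroot b m (wmap ws x) = aroot b' m' x"
    using aroot_wmap[OF assms(1,2)] by blast
  then show ?thesis using aroot_sign_on_alcove[of b' x x' m'] assms by simp
qed

section \<open>Fundamental coweights\<close>

lemma span_simple: "span (alpha ` {1..l}) = UNIV"
proof -
  have "card (alpha ` {1..l}) = DIM('a)" using simple_inj ldim by (simp add: card_image)
  then show ?thesis using simple_indep
    by (metis card_ge_dim_independent dim_UNIV order_refl span_superset subset_UNIV subset_antisym)
qed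

lemma coweight_exists:
  assumes "k \<in> {1..l}" shows "\<exists>w. \<forall>i\<in>{1..l}. alpha i \<bullet> w = (if i = k then 1 else 0)"
proof -
  let ?S = "alpha ` ({1..l} - {k})"
  have "dim ?S \<le> card ?S" by (rule dim_le_card) (auto simp: span_superset)
  also have "card ?S \<le> card ({1..l} - {k})" by (rule card_image_le) simp
  also have "\<dots> = l - 1" using assms by simp
  finally have dS: "dim ?S < DIM('a)" using ldim l_pos by linarith
  obtain x where x: "x \<noteq> 0" "\<And>y. y \<in> span ?S \<Longrightarrow> orthogonal x y"
    using orthogonal_to_subspace_exists[OF dS] by blast
  have ortho: "alpha i \<bullet> x = 0" if "i \<in> {1..l}" "i \<noteq> k" for i
    using x(2)[of "alpha i"] that span_base[of "alpha i" ?S] by (auto simp: orthogonal_def inner_commute)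
  have nz: "alpha k \<bullet> x \<noteq> 0"
  proof
    assume "alpha k \<bullet> x = 0"
    then have "\<forall>y\<in>alpha ` {1..l}. orthogonal x y" using ortho
      by (auto simp: orthogonal_def inner_commute) (metis atLeastAtMost_iff)
    then have "orthogonal x x" using span_simple orthogonal_to_span by blast
    then show False using x(1) by (simp add: orthogonal_def)
  qed
  show ?thesis
    by (intro exI[of _ "(1 / (alpha k \<bullet> x)) *\<^sub>R x"]) (use nz ortho in auto)
qed

definition coweight where
  "coweight k = (SOME w. \<forall>i\<in>{1..l}. alpha i \<bullet> w = (if i = k then 1 else 0))"

lemma alpha_coweight:
  "k \<in> {1..l} \<Longrightarrow> i \<in> {1..l} \<Longrightarrow> alpha i \<bullet> coweight k = (if i = k then 1 else 0)"
  using someI_ex[OF coweight_exists[of k]] unfolding coweight_def by blast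

lemma combination_coweights:
  assumes "K \<subseteq> {1..l}"
  shows "(\<Sum>i=1..l. r i *\<^sub>R alpha i) \<bullet> (\<Sum>k\<in>K. coweight k) = (\<Sum>k\<in>K. r k)"
proof -
  have "(\<Sum>i=1..l. r i *\<^sub>R alpha i) \<bullet> (\<Sum>k\<in>K. coweight k)
      = (\<Sum>k\<in>K. \<Sum>i=1..l. r i * (alpha i \<bullet> coweight k))"
    by (simp add: inner_sum_left inner_sum_right sum.swap[of _ "{1..l}"])
  also have "\<dots> = (\<Sum>k\<in>K. r k)"
  proof (rule sum.cong[OF refl])
    fix k assume "k \<in> K"
    then have k: "k \<in> {1..l}" using assms by auto
    have "(\<Sum>i=1..l. r i * (alpha i \<bullet> coweight k)) = (\<Sum>i\<in>{1..l}. if i = k then r k else 0)"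
      by (rule sum.cong) (auto simp: alpha_coweight[OF k])
    then show "(\<Sum>i=1..l. r i * (alpha i \<bullet> coweight k)) = r k" using k by simp
  qed
  finally show ?thesis .
qed

lemma alpha_coweights:
  assumes "K \<subseteq> {1..l}" "i \<in> {1..l}"
  shows "alpha i \<bullet> (\<Sum>k\<in>K. coweight k) = (if i \<in> K then 1 else 0)"
proof -
  have "alpha i \<bullet> (\<Sum>k\<in>K. coweight k) = (\<Sum>k\<in>K. if i = k then 1 else 0)"
    using assms by (auto simp: inner_sum_right alpha_coweight intro!: sum.cong)
  also have "\<dots> = (if i \<in> K then 1 else 0)" using assms finite_subset[OF assms(1)] by auto
  finally show ?thesis .
qed

lemma root_coweights:
  assumes "b \<in> R" "K \<subseteq> {1..l}"
  obtains c :: "nat \<Rightarrow> int" where "b = (\<Sum>i=1..l. of_int (c i) *\<^sub>R alpha i)"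
    "(\<forall>i. c i \<ge> 0) \<or> (\<forall>i. c i \<le> 0)" "b \<bullet> (\<Sum>k\<in>K. coweight k) = of_int (\<Sum>k\<in>K. c k)"
proof -
  obtain c :: "nat \<Rightarrow> int" where c: "b = (\<Sum>i=1..l. of_int (c i) *\<^sub>R alpha i)"
    and sg: "(\<forall>i. c i \<ge> 0) \<or> (\<forall>i. c i \<le> 0)" using simple_coeffs[OF assms(1)] by blast
  have "b \<bullet> (\<Sum>k\<in>K. coweight k) = (\<Sum>k\<in>K. of_int (c k))"
    using combination_coweights[OF assms(2), of "\<lambda>i. of_int (c i)"] c by simp
  then show ?thesis using that[OF c sg] by simp
qed

lemma abs_root_coweights:
  assumes "b \<in> R" "K \<subseteq> {1..l}"
  shows "\<bar>b \<bullet> (\<Sum>k\<in>K. coweight k)\<bar> \<le> amax \<bullet> (\<Sum>k\<in>K. coweight k)"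
proof -
  have "\<forall>i\<in>{1..l}. alpha i \<bullet> (\<Sum>k\<in>K. coweight k) \<ge> 0" using alpha_coweights[OF assms(2)] by simp
  then show ?thesis using root_le_amax[OF assms(1)] root_le_amax[OF uminus_in_R[OF assms(1)]]
    by (simp add: abs_le_iff)
qed

lemma sign_uniform_sum_zero:
  fixes c :: "nat \<Rightarrow> int"
  assumes "(\<forall>i. c i \<ge> 0) \<or> (\<forall>i. c i \<le> 0)" "finite K" "(\<Sum>k\<in>K. c k) = 0"
  shows "\<forall>k\<in>K. c k = 0"
  using assms(1)
proof
  assume "\<forall>i. c i \<ge> 0" then show ?thesis using assms(2,3) sum_nonneg_eq_0_iff by blast
next
  assume "\<forall>i. c i \<le> 0"
  moreover have "(\<Sum>k\<in>K. - c k) = 0" using assms(3) by (simp add: sum_negf)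
  ultimately show ?thesis using assms(2) sum_nonneg_eq_0_iff[of K "\<lambda>k. - c k"] by auto
qed

lemma height_eq_amax:
  assumes "b \<in> R" "b \<bullet> (\<Sum>k\<in>{1..l}. coweight k) = amax \<bullet> (\<Sum>k\<in>{1..l}. coweight k)"
  shows "b = amax"
proof -
  obtain c where c: "amax - b = (\<Sum>i=1..l. of_nat (c i) *\<^sub>R alpha i)"
    using amax_minus[OF assms(1)] by blast
  have "(amax - b) \<bullet> (\<Sum>k\<in>{1..l}. coweight k) = (\<Sum>k\<in>{1..l}. real (c k))"
    unfolding c by (rule combination_coweights) simp
  then have "(\<Sum>k\<in>{1..l}. c k) = 0" using assms(2) by (simp add: inner_diff_left flip: of_nat_sum)
  then have "amax - b = 0" unfolding c by (intro sum.neutral) auto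
  then show ?thesis by simp
qed

text \<open>The height of the highest root is at least that of a simple root, hence at least 1.\<close>
lemma height_amax_ge_1: "amax \<bullet> (\<Sum>k\<in>{1..l}. coweight k) \<ge> 1"
proof -
  have one: "1 \<in> {1..l}" using l_pos by simp
  obtain c where c: "amax - alpha 1 = (\<Sum>i=1..l. of_nat (c i) *\<^sub>R alpha i)"
    using amax_minus[OF simple_in_R[OF one]] by blast
  have "(amax - alpha 1) \<bullet> (\<Sum>k\<in>{1..l}. coweight k) = (\<Sum>k\<in>{1..l}. real (c k))"
    unfolding c by (rule combination_coweights) simp
  moreover have "alpha 1 \<bullet> (\<Sum>k\<in>{1..l}. coweight k) = 1" using alpha_coweights[OF _ one] one by simp
  moreover have "0 \<le> (\<Sum>k\<in>{1..l}. real (c k))" by (intro sum_nonneg) auto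
  ultimately show ?thesis by (simp add: inner_diff_left)
qed

text \<open>A root orthogonal to the coweights in K is a combination of the simple roots outside
  K, since its coefficients have a common sign.\<close>
lemma root_orthogonal_coweights:
  assumes b: "b \<in> R" and K: "K \<subseteq> {1..l}" and orth: "b \<bullet> (\<Sum>k\<in>K. coweight k) = 0"
  shows "\<exists>c::nat \<Rightarrow> int. b = (\<Sum>i\<in>{1..l} - K. of_int (c i) *\<^sub>R alpha i)"
proof -
  obtain c :: "nat \<Rightarrow> int" where c: "b = (\<Sum>i=1..l. of_int (c i) *\<^sub>R alpha i)"
    and sg: "(\<forall>i. c i \<ge> 0) \<or> (\<forall>i. c i \<le> 0)" and bW: "b \<bullet> (\<Sum>k\<in>K. coweight k) = of_int (\<Sum>k\<in>K. c k)"
    using root_coweights[OF b K] by metis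
  have "real_of_int (\<Sum>k\<in>K. c k) = 0" using orth bW by linarith
  then have "(\<Sum>k\<in>K. c k) = 0" by (simp only: of_int_eq_0_iff)
  moreover have "finite K" by (rule finite_subset[OF K]) simp
  ultimately have "\<forall>k\<in>K. c k = 0" using sign_uniform_sum_zero[OF sg] by blast
  then have "b = (\<Sum>i\<in>{1..l} - K. of_int (c i) *\<^sub>R alpha i)"
    unfolding c by (intro sum.mono_neutral_right) auto
  then show ?thesis by blast
qed

lemma root_height_nonzero: "b \<in> R \<Longrightarrow> b \<bullet> (\<Sum>k\<in>{1..l}. coweight k) \<noteq> 0"
  using root_orthogonal_coweights[of b "{1..l}"] zero_notin_R by force

lemma root_orthogonal_other_coweights:
  assumes j: "j \<in> {1..l}" and b: "b \<in> R" and orth: "b \<bullet> (\<Sum>k\<in>{1..l} - {j}. coweight k) = 0"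
  shows "b = alpha j \<or> b = - alpha j"
proof -
  obtain c :: "nat \<Rightarrow> int" where "b = (\<Sum>i\<in>{1..l} - ({1..l} - {j}). of_int (c i) *\<^sub>R alpha i)"
    using root_orthogonal_coweights[OF b _ orth] by blast
  moreover have "{1..l} - ({1..l} - {j}) = {j}" using j by auto
  ultimately have bj: "b = of_int (c j) *\<^sub>R alpha j" by simp
  then have "real_of_int (c j) = 1 \<or> real_of_int (c j) = -1"
    using reduced_R[OF simple_in_R[OF j]] b by blast
  then show ?thesis using bj by auto
qed

section \<open>Points on a single wall\<close>

definition wall_point :: "nat \<Rightarrow> 'a \<Rightarrow> real \<Rightarrow> bool" where
  "wall_point j q N \<longleftrightarrow> N > 0 \<and> q \<in> C \<and> wall j q = 0 \<and>
     (\<forall>b\<in>R. \<forall>m. aroot b m q = 0 \<longrightarrow> same_mirror b m (alpha j) (delta j)) \<and>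
     (\<forall>b\<in>R. \<forall>m. aroot b m q \<noteq> 0 \<longrightarrow> 1/N \<le> \<bar>aroot b m q\<bar>)"

lemma coweight_point_gap:
  assumes K: "K \<subseteq> {1..l}" and b: "b \<in> R" and Nz: "Nz > 0"
    and nz: "aroot b m ((1 / of_int Nz) *\<^sub>R (\<Sum>k\<in>K. coweight k)) \<noteq> 0"
  shows "1 / of_int Nz \<le> \<bar>aroot b m ((1 / of_int Nz) *\<^sub>R (\<Sum>k\<in>K. coweight k))\<bar>"
proof -
  obtain n :: int where bW: "b \<bullet> (\<Sum>k\<in>K. coweight k) = of_int n"
    using root_coweights[OF b K] by metis
  have val: "aroot b m ((1 / of_int Nz) *\<^sub>R (\<Sum>k\<in>K. coweight k)) = of_int (n + m * Nz) / of_int Nz"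
    using aroot_scaled[OF bW] Nz by simp
  have "n + m * Nz \<noteq> 0"
  proof
    assume "n + m * Nz = 0"
    then show False using nz val by simp
  qed
  then show ?thesis unfolding val by (rule lattice_gap) (use Nz in simp)
qed

text \<open>For a simple wall take q = W / (M + 1), where W sums the coweights other than the
  j-th and M = <amax, W>: all other simple walls and the affine wall stay positive.\<close>
lemma wall_point_simple:
  assumes j: "j \<in> {1..l}" shows "\<exists>q N. wall_point j q N"
proof -
  define K where "K = {1..l} - {j}"
  have K: "K \<subseteq> {1..l}" by (auto simp: K_def)
  define W where "W = (\<Sum>k\<in>K. coweight k)"
  obtain M :: int where M: "amax \<bullet> W = of_int M"
    using root_coweights[OF amax_in_R K] unfolding W_def by metis
  have "0 \<le> amax \<bullet> W" using abs_root_coweights[OF amax_in_R K] unfolding W_def by linarith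
  then have M0: "M \<ge> 0" using M by simp
  define N where "N = real_of_int (M + 1)"
  define q where "q = (1 / N) *\<^sub>R W"
  have N: "N > 0" using M0 by (simp add: N_def)
  have aq: "alpha i \<bullet> q = (if i \<in> K then 1/N else 0)" if "i \<in> {1..l}" for i
    using alpha_coweights[OF K that] by (simp add: q_def W_def)
  have "amax \<bullet> q \<le> 1" using M0 by (simp add: q_def M N_def)
  then have qC: "q \<in> C" using aq N alpha0 by (auto simp: C_def aroot_def delta_def)
  have wallj: "wall j q = 0" using aq[OF j] j by (simp add: K_def aroot_def delta_def)
  have gap: "1/N \<le> \<bar>aroot b m q\<bar>" if "b \<in> R" "aroot b m q \<noteq> 0" for b m
    using coweight_point_gap[OF K that(1), of "M + 1" m] that(2) M0
    unfolding q_def N_def W_def by simp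
  have zero: "same_mirror b m (alpha j) (delta j)" if b: "b \<in> R" and z: "aroot b m q = 0" for b m
  proof -
    obtain n :: int where bW: "b \<bullet> W = of_int n" using root_coweights[OF b K] unfolding W_def by metis
    have "\<bar>real_of_int n\<bar> \<le> real_of_int M" using abs_root_coweights[OF b K] bW M unfolding W_def by simp
    then have n: "\<bar>n\<bar> \<le> M" by (simp only: of_int_abs[symmetric] of_int_le_iff)
    have val: "aroot b m q = of_int (n + m * (M + 1)) / N"
      using aroot_scaled[OF bW, of "M + 1"] M0 by (simp add: q_def N_def)
    from z have "of_int (n + m * (M + 1)) / N = 0" unfolding val .
    then have nm: "n + m * (M + 1) = 0" using N by (auto simp only: divide_eq_0_iff of_int_eq_0_iff)
    text \<open>Since |n| \<le> M < M + 1, both n and m vanish.\<close>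
    have m0: "m = 0"
    proof (rule ccontr)
      assume "m \<noteq> 0"
      then have "\<bar>m * (M + 1)\<bar> \<ge> M + 1" using M0 by (simp add: abs_mult mult_le_cancel_right1)
      then show False using nm n by linarith
    qed
    with nm bW have "b \<bullet> W = 0" by simp
    then have "b = alpha j \<or> b = - alpha j"
      using root_orthogonal_other_coweights[OF j b] unfolding W_def K_def by blast
    then show ?thesis using m0 j by (auto simp: same_mirror_def delta_def)
  qed
  have "wall_point j q N" unfolding wall_point_def using N qC wallj zero gap by simp
  then show ?thesis by blast
qed

text \<open>For the affine wall take q = W / M, where W sums all coweights and M = <amax, W>.\<close>
lemma wall_point_affine: "\<exists>q N. wall_point 0 q N"
proof -
  define W where "W = (\<Sum>k\<in>{1..l}. coweight k)"
  obtain M :: int where M: "amax \<bullet> W = of_int M"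
    using root_coweights[OF amax_in_R order_refl] unfolding W_def by metis
  have M1: "M \<ge> 1" using height_amax_ge_1 M unfolding W_def by simp
  define N where "N = real_of_int M"
  define q where "q = (1 / N) *\<^sub>R W"
  have N: "N > 0" using M1 by (simp add: N_def)
  have aq: "alpha i \<bullet> q = 1/N" if "i \<in> {1..l}" for i
    using alpha_coweights[OF order_refl that] that by (simp add: q_def W_def)
  have amq: "amax \<bullet> q = 1" using N by (simp add: q_def M N_def)
  have wall0: "wall 0 q = 0" using alpha0 amq by (simp add: aroot_def delta_def)
  have qC: "q \<in> C" using aq N wall0 by (auto simp: C_def aroot_def delta_def)
  have gap: "1/N \<le> \<bar>aroot b m q\<bar>" if "b \<in> R" "aroot b m q \<noteq> 0" for b m
    using coweight_point_gap[OF order_refl that(1), of M m] that(2) M1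
    unfolding q_def N_def W_def by simp
  have zero: "same_mirror b m (alpha 0) (delta 0)" if b: "b \<in> R" and z: "aroot b m q = 0" for b m
  proof -
    obtain n :: int where bW: "b \<bullet> W = of_int n"
      using root_coweights[OF b order_refl] unfolding W_def by metis
    have "\<bar>real_of_int n\<bar> \<le> real_of_int M"
      using abs_root_coweights[OF b order_refl] bW M unfolding W_def by simp
    then have n: "\<bar>n\<bar> \<le> M" by (simp only: of_int_abs[symmetric] of_int_le_iff)
    have val: "aroot b m q = of_int (n + m * M) / N"
      using aroot_scaled[OF bW, of M] M1 by (simp add: q_def N_def)
    from z have "of_int (n + m * M) / N = 0" unfolding val .
    then have nm: "n + m * M = 0" using N by (auto simp only: divide_eq_0_iff of_int_eq_0_iff)
    text \<open>Since |n| \<le> M, m is 0 or \<plusminus>1; the first contradicts the nonzero height of b,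
      the others force b = \<plusminus>amax.\<close>
    have "\<bar>m\<bar> \<le> 1"
    proof (rule ccontr)
      assume "\<not> \<bar>m\<bar> \<le> 1"
      then have "\<bar>m * M\<bar> \<ge> 2 * M" using M1 by (simp add: abs_mult mult_right_mono)
      then show False using nm n M1 by linarith
    qed
    then consider "m = 0" | "m = 1" | "m = -1" by linarith
    then show ?thesis
    proof cases
      case 1
      then show ?thesis using nm bW root_height_nonzero[OF b] unfolding W_def by simp
    next
      case 2
      then have "(- b) \<bullet> W = amax \<bullet> W" using nm bW M by simp
      then have "- b = amax" using height_eq_amax[OF uminus_in_R[OF b]] by (simp add: W_def)
      then show ?thesis using 2 alpha0 by (auto simp: same_mirror_def delta_def)
    next
      case 3
      then have "b \<bullet> W = amax \<bullet> W" using nm bW M by simp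
      then have "b = amax" using height_eq_amax[OF b] by (simp add: W_def)
      then show ?thesis using 3 alpha0 by (auto simp: same_mirror_def delta_def)
    qed
  qed
  have "wall_point 0 q N" unfolding wall_point_def using N qC wall0 zero gap by simp
  then show ?thesis by blast
qed

lemma wall_point_exists: "j \<le> l \<Longrightarrow> \<exists>q N. wall_point j q N"
  using wall_point_affine wall_point_simple[of j] by (cases "j = 0") auto

lemma alpha_coroot: "i \<le> l \<Longrightarrow> alpha i \<bullet> coroot (alpha i) = 2"
  using alpha_nonzero[of i] by (simp add: coroot_def)

text \<open>Distinct generators have distinct mirrors (using that the simple roots are
  linearly independent).\<close>
lemma distinct_walls:
  assumes "i \<le> l" "j \<le> l" "i \<noteq> j"
  shows "\<not> same_mirror (alpha i) (delta i) (alpha j) (delta j)"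
proof
  assume h: "same_mirror (alpha i) (delta i) (alpha j) (delta j)"
  show False
  proof (cases "i = 0 \<or> j = 0")
    case True then show False using h assms by (auto simp: same_mirror_def delta_def)
  next
    case False
    then have ij: "i \<in> {1..l}" "j \<in> {1..l}" using assms by auto
    then have "alpha i \<noteq> alpha j" using simple_inj assms(3) by (auto dest: inj_onD)
    with h have e: "alpha i = - alpha j" by (auto simp: same_mirror_def)
    have "alpha j \<noteq> - alpha j"
    proof
      assume "alpha j = - alpha j"
      then have "2 *\<^sub>R alpha j = 0" by (metis add.right_inverse scaleR_2)
      then show False using alpha_nonzero[OF assms(2)] by simp
    qed
    then have "alpha j \<in> alpha ` {1..l} - {alpha i}" using e ij by auto
    then have "- alpha j \<in> span (alpha ` {1..l} - {alpha i})" by (intro span_neg span_base)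
    then have "alpha i \<in> span (alpha ` {1..l} - {alpha i})" using e by metis
    then have "dependent (alpha ` {1..l})" using ij unfolding dependent_def by blast
    then show False using simple_indep by simp
  qed
qed

text \<open>There is a point p of the alcove such that the only affine root hyperplane separating
  p from its mirror image s_j p is the j-th wall: push a point of the j-th wall only slightly
  into the alcove.\<close>
lemma crossing_point:
  assumes j: "j \<le> l"
  shows "\<exists>p\<in>A. \<forall>b\<in>R. \<forall>m. (aroot b m p > 0) \<noteq> (aroot b m (s j p) > 0) \<longrightarrow>
           same_mirror b m (alpha j) (delta j)"
proof -
  obtain q N where wp: "wall_point j q N" using wall_point_exists[OF j] by blast
  then have N: "N > 0" and qC: "q \<in> C" and wj: "wall j q = 0"
    and zero: "\<forall>b\<in>R. \<forall>m. aroot b m q = 0 \<longrightarrow> same_mirror b m (alpha j) (delta j)"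
    and gap: "\<forall>b\<in>R. \<forall>m. aroot b m q \<noteq> 0 \<longrightarrow> 1/N \<le> \<bar>aroot b m q\<bar>"
    unfolding wall_point_def by blast+
  define v where "v = coroot (alpha j)"
  text \<open>The displacement t v is too small to cross any hyperplane not through q.\<close>
  obtain t where t0: "t > 0" and small: "\<And>b. b \<in> R \<Longrightarrow> \<bar>t * (b \<bullet> v)\<bar> < 1/N"
    using small_displacement[OF finite_R N] by blast
  define p where "p = q + t *\<^sub>R v"
  have wjp: "wall j p = 2 * t"
    using wj alpha_coroot[OF j] by (simp add: p_def v_def aroot_def inner_add_right)
  have "(2 * t) *\<^sub>R v = t *\<^sub>R v + t *\<^sub>R v" by (metis mult_2 scaleR_add_left)
  then have sp: "s j p = q - t *\<^sub>R v" using wjp by (simp add: sgen_eq p_def flip: v_def)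
  have pA: "p \<in> A"
    unfolding alcove_iff
  proof (intro allI impI)
    fix i assume i: "i \<le> l"
    show "wall i p > 0"
    proof (cases "i = j")
      case True then show ?thesis using wjp t0 by simp
    next
      case False
      have nz: "wall i q \<noteq> 0" using zero alpha_in_R[OF i] distinct_walls[OF i j False] by blast
      then have "1/N \<le> \<bar>wall i q\<bar>" using gap alpha_in_R[OF i] by blast
      moreover have "wall i q > 0" using nz qC i unfolding C_def by force
      ultimately show ?thesis using aroot_perturb_sign(1)[OF _ small[OF alpha_in_R[OF i]]]
        by (simp add: p_def)
    qed
  qed
  have "same_mirror b m (alpha j) (delta j)"
    if b: "b \<in> R" and ne: "(aroot b m p > 0) \<noteq> (aroot b m (s j p) > 0)" for b m
  proof (rule ccontr)
    assume "\<not> ?thesis"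
    then have g: "1/N \<le> \<bar>aroot b m q\<bar>" using zero gap b by blast
    have "(aroot b m p > 0) = (aroot b m q > 0)"
      using aroot_perturb_sign(1)[OF g small[OF b]] by (simp add: p_def)
    moreover have "(aroot b m (s j p) > 0) = (aroot b m q > 0)"
      using aroot_perturb_sign(2)[OF g small[OF b]] by (simp add: sp)
    ultimately show False using ne by simp
  qed
  with pA show ?thesis by blast
qed

section \<open>The exchange property and reduced words\<close>

text \<open>An affine root that changes sign between a point x of the alcove and s_j x defines the
  j-th wall: transport the sign change to the crossing point.\<close>
lemma sign_change_under_sgen:
  assumes j: "j \<le> l" and b: "b \<in> R" and x: "x \<in> A"
    and ne: "(aroot b m x > 0) \<noteq> (aroot b m (s j x) > 0)"
  shows "same_mirror b m (alpha j) (delta j)"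
proof -
  obtain p where p: "p \<in> A" and cross: "\<forall>b\<in>R. \<forall>m. (aroot b m p > 0) \<noteq> (aroot b m (s j p) > 0) \<longrightarrow>
           same_mirror b m (alpha j) (delta j)"
    using crossing_point[OF j] by blast
  obtain b' m' where b': "b' \<in> R" and comp: "\<forall>y. aroot b m (s j y) = aroot b' m' y"
    using aroot_sgen[OF j b] by blast
  have "(aroot b m x > 0) = (aroot b m p > 0)" using aroot_sign_on_alcove[OF b x p] by blast
  moreover have "(aroot b m (s j x) > 0) = (aroot b m (s j p) > 0)"
    using aroot_sign_on_alcove[OF b' x p] comp by simp
  ultimately show ?thesis using cross b ne by metis
qed

lemma sgen_commute:
  assumes ws: "set ws \<subseteq> {..l}" and i: "i \<le> l" and j: "j \<le> l"
    and bm: "\<forall>y. wall i (wmap ws y) = aroot b m y" and sm: "same_mirror b m (alpha j) (delta j)"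
  shows "s i \<circ> wmap ws = wmap ws \<circ> s j"
proof -
  from sm consider "b = alpha j \<and> m = delta j" | "b = - alpha j \<and> m = - delta j"
    unfolding same_mirror_def by blast
  then obtain e :: real where e: "e = 1 \<or> e = -1"
    and h: "\<forall>y. alpha i \<bullet> wmap ws y + of_int (delta i) = e * (alpha j \<bullet> y + of_int (delta j))"
  proof cases
    case 1 then show ?thesis using that[of 1] bm by (simp add: aroot_def)
  next
    case 2 then show ?thesis using that[of "-1"] bm by (simp add: aroot_def)
  qed
  show ?thesis unfolding sgen_aff_refl
    by (rule aff_refl_conjugate[OF wmap_isometry[OF ws] alpha_nonzero[OF i] alpha_nonzero[OF j] e h])
qed

text \<open>Induction on the word from the right: the
  first letter j at which the sign changes satisfies s_i w' = w' s_j.\<close>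
lemma exchange:
  assumes x: "x \<in> A" and i: "i \<le> l"
  shows "set ws \<subseteq> {..l} \<Longrightarrow> wall i (wmap ws x) < 0 \<Longrightarrow>
     \<exists>ws'. set ws' \<subseteq> {..l} \<and> length ws' < length ws \<and> s i \<circ> wmap ws = wmap ws'"
proof (induction ws rule: rev_induct)
  case Nil then show ?case using x i alcove_iff by auto
next
  case (snoc j ws0)
  have ws0: "set ws0 \<subseteq> {..l}" and j: "j \<le> l" using snoc.prems by auto
  have split: "wmap (ws0 @ [j]) = wmap ws0 \<circ> s j" by (simp add: word_map_append)
  show ?case
  proof (cases "wall i (wmap ws0 x) < 0")
    case True
    then obtain ws' where ws': "set ws' \<subseteq> {..l}" "length ws' < length ws0" "s i \<circ> wmap ws0 = wmap ws'"
      using snoc.IH[OF ws0] by blast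
    show ?thesis
    proof (intro exI[of _ "ws' @ [j]"] conjI)
      show "s i \<circ> wmap (ws0 @ [j]) = wmap (ws' @ [j])"
        using ws'(3) by (simp add: word_map_append comp_assoc[symmetric])
    qed (use ws' j in auto)
  next
    case False
    obtain b m where b: "b \<in> R" and bm: "\<forall>y. wall i (wmap ws0 y) = aroot b m y"
      using aroot_wmap[OF ws0 alpha_in_R[OF i], of "delta i"] by blast
    have "wall i (wmap ws0 x) \<noteq> 0" using aroot_wmap_sign_on_alcove[OF ws0 alpha_in_R[OF i] x x] by simp
    with False have "aroot b m x > 0" using bm by simp
    moreover have "aroot b m (s j x) < 0" using snoc.prems(2) split bm by simp
    ultimately have "same_mirror b m (alpha j) (delta j)"
      using sign_change_under_sgen[OF j b x] by auto
    then have "s i \<circ> wmap ws0 = wmap ws0 \<circ> s j" by (rule sgen_commute[OF ws0 i j bm])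
    then have "s i \<circ> wmap (ws0 @ [j]) = wmap ws0"
      using sgen_sgen[OF j] by (auto simp: split fun_eq_iff)
    then show ?thesis using ws0 by (intro exI[of _ ws0]) auto
  qed
qed

definition reduced where
  "reduced ws \<longleftrightarrow> set ws \<subseteq> {..l} \<and>
     (\<forall>ws'. set ws' \<subseteq> {..l} \<and> wmap ws' = wmap ws \<longrightarrow> length ws \<le> length ws')"

lemma reduced_exists:
  assumes "set ws \<subseteq> {..l}" shows "\<exists>ws0. reduced ws0 \<and> wmap ws0 = wmap ws"
proof -
  obtain ws0 where "(set ws0 \<subseteq> {..l} \<and> wmap ws0 = wmap ws) \<and>
     (\<forall>y. (set y \<subseteq> {..l} \<and> wmap y = wmap ws) \<longrightarrow> length ws0 \<le> length y)"
    using ex_has_least_nat[of "\<lambda>w. set w \<subseteq> {..l} \<and> wmap w = wmap ws" ws length] assms by blast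
  then show ?thesis unfolding reduced_def by metis
qed

lemma reduced_Cons: "reduced (i # ws) \<Longrightarrow> reduced ws"
  unfolding reduced_def
proof (intro conjI allI impI)
  fix ws' assume "set (i # ws) \<subseteq> {..l} \<and> (\<forall>ws'. set ws' \<subseteq> {..l} \<and> wmap ws' = wmap (i # ws)
      \<longrightarrow> length (i # ws) \<le> length ws')"
    and "set ws' \<subseteq> {..l} \<and> wmap ws' = wmap ws"
  then have "length (i # ws) \<le> length (i # ws')" by (metis word_map.simps(2) insert_subset list.set(2))
  then show "length ws \<le> length ws'" by simp
qed auto

text \<open>For a reduced word starting with s_i, the alcove is mapped to the negative side of
  the i-th wall (otherwise the exchange property would shorten the word).\<close>
lemma reduced_wall_neg:
  assumes red: "reduced (i # ws)" and x: "x \<in> A"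
  shows "wall i (wmap (i # ws) x) < 0"
proof -
  have i: "i \<le> l" and ws: "set ws \<subseteq> {..l}" using red by (auto simp: reduced_def)
  have "\<not> wall i (wmap ws x) < 0"
  proof
    assume "wall i (wmap ws x) < 0"
    then obtain ws' where "set ws' \<subseteq> {..l}" "length ws' < length ws" "s i \<circ> wmap ws = wmap ws'"
      using exchange[OF x i ws] by blast
    then show False using red unfolding reduced_def
      by (metis word_map.simps(2) le_trans less_imp_le_nat not_le impossible_Cons)
  qed
  moreover have "wall i (wmap ws x) \<noteq> 0"
    using aroot_wmap_sign_on_alcove[OF ws alpha_in_R[OF i] x x] by simp
  ultimately show ?thesis using wall_sgen[OF i] by simp
qed

text \<open>The alcove is nonempty (it contains the crossing point of any wall).\<close>
lemma alcove_nonempty: "\<exists>p. p \<in> A"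
  using crossing_point[of 0] by auto

lemma segment_into_alcove:
  assumes x: "x \<in> C" and p: "p \<in> A" and t: "0 < t" "t \<le> 1"
  shows "x + t *\<^sub>R (p - x) \<in> A"
  unfolding alcove_iff
proof (intro allI impI)
  fix k assume k: "k \<le> l"
  have "0 \<le> (1 - t) * wall k x" using x k t by (simp add: C_def)
  moreover have "0 < t * wall k p" using p k t alcove_iff by simp
  ultimately show "wall k (x + t *\<^sub>R (p - x)) > 0" by (simp add: aroot_segment)
qed

lemma closed_alcove_subset_closure: "C \<subseteq> closure A"
proof
  fix x assume x: "x \<in> C"
  obtain p where p: "p \<in> A" using alcove_nonempty by blast
  define y where "y n = x + (1 / Suc n) *\<^sub>R (p - x)" for n
  have "y \<longlonglongrightarrow> x + 0 *\<^sub>R (p - x)"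
    unfolding y_def by (intro tendsto_intros lim_1_over_n[THEN LIMSEQ_Suc])
  moreover have "y n \<in> A" for n
    unfolding y_def by (rule segment_into_alcove[OF x p]) auto
  ultimately show "x \<in> closure A" unfolding closure_sequential by auto
qed

lemma reduced_wall_nonpos:
  assumes red: "reduced (i # ws)" and x: "x \<in> C"
  shows "wall i (wmap (i # ws) x) \<le> 0"
proof -
  have iws: "set (i # ws) \<subseteq> {..l}" using red by (simp add: reduced_def)
  then have i: "i \<le> l" by simp
  obtain b m where b: "b \<in> R" and bm: "\<forall>y. wall i (wmap (i # ws) y) = aroot b m y"
    using aroot_wmap[OF iws alpha_in_R[OF i], of "delta i"] by blast
  have "closed {y. aroot b m y \<le> 0}"
    by (rule closed_Collect_le) (auto simp: aroot_def intro!: continuous_intros)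
  moreover have "A \<subseteq> {y. aroot b m y \<le> 0}" using reduced_wall_neg[OF red] bm by force
  ultimately have "closure A \<subseteq> {y. aroot b m y \<le> 0}" by (rule closure_minimal[rotated])
  then show ?thesis using closed_alcove_subset_closure x bm by auto
qed

section \<open>The key inequality\<close>

text \<open>For x1, x2 in the closed alcove and w given by a reduced word, |x1 - x2| \<le> |w x1 - x2|:
  peel off the first letter s_i; w x1 is on the non-positive side of the i-th wall and x2 on
  the non-negative side, so reflecting w x1 moves it closer to x2.\<close>
lemma key_inequality_reduced:
  assumes "reduced ws" "x1 \<in> C" "x2 \<in> C"
  shows "dist x1 x2 \<le> dist (wmap ws x1) x2"
  using assms(1)
proof (induction ws)
  case (Cons i ws)
  have i: "i \<le> l" using Cons.prems by (simp add: reduced_def)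
  let ?z = "wmap (i # ws) x1"
  have "dist (s i ?z) x2 \<le> dist ?z x2"
    unfolding sgen_aff_refl
  proof (rule aff_refl_dist_le[OF alpha_nonzero[OF i]])
    show "alpha i \<bullet> ?z + of_int (delta i) \<le> 0"
      using reduced_wall_nonpos[OF Cons.prems assms(2)] by (simp add: aroot_def)
    show "alpha i \<bullet> x2 + of_int (delta i) \<ge> 0" using assms(3) i by (simp add: C_def aroot_def)
  qed
  moreover have "s i ?z = wmap ws x1" using sgen_sgen[OF i] by simp
  ultimately show ?case using Cons.IH reduced_Cons[OF Cons.prems] by simp
qed simp

lemma key_inequality:
  assumes "set ws \<subseteq> {..l}" "x1 \<in> C" "x2 \<in> C"
  shows "dist x1 x2 \<le> dist (wmap ws x1) x2"
  using reduced_exists[OF assms(1)] key_inequality_reduced[OF _ assms(2,3)] by metis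

text \<open>An element of the affine Weyl group mapping a point of the alcove into the alcove is
  the identity: a nonempty reduced word maps the alcove to the negative side of a wall.\<close>
lemma stabilizer_trivial:
  assumes "set ws \<subseteq> {..l}" "x \<in> A" "wmap ws x \<in> A"
  shows "wmap ws = id"
proof -
  obtain ws0 where red: "reduced ws0" and eq: "wmap ws0 = wmap ws"
    using reduced_exists[OF assms(1)] by blast
  show ?thesis
  proof (cases ws0)
    case Nil then show ?thesis using eq by simp
  next
    case (Cons i ws')
    then have "wall i (wmap ws0 x) < 0" using reduced_wall_neg red assms(2) by blast
    moreover have "i \<le> l" using red Cons by (simp add: reduced_def)
    ultimately show ?thesis using assms(3) eq alcove_iff by force
  qed
qed

section \<open>The closed alcove is a fundamental domain\<close>

definition separating :: "'a \<Rightarrow> 'a \<Rightarrow> ('a \<Rightarrow> real) set" where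
  "separating p z = {f. \<exists>b\<in>R. \<exists>m. f = aroot b m \<and> f z * f p < 0}"

text \<open>Only finitely many hyperplanes separate two points: |m| is bounded by
  |<b,z>| + |<b,p>|.\<close>
lemma finite_separating: "finite (separating p z)"
proof -
  define K where "K = \<lceil>\<Sum>b\<in>R. \<bar>b \<bullet> z\<bar> + \<bar>b \<bullet> p\<bar>\<rceil>"
  have "separating p z \<subseteq> (\<lambda>(b, m). aroot b m) ` (R \<times> {-K..K})"
  proof
    fix f assume "f \<in> separating p z"
    then obtain b m where b: "b \<in> R" and f: "f = aroot b m" and neg: "f z * f p < 0"
      by (auto simp: separating_def)
    have "\<bar>real_of_int m\<bar> \<le> \<bar>b \<bullet> z\<bar> + \<bar>b \<bullet> p\<bar>"
      using neg unfolding f aroot_def mult_less_0_iff by linarith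
    also have "\<dots> \<le> (\<Sum>b\<in>R. \<bar>b \<bullet> z\<bar> + \<bar>b \<bullet> p\<bar>)"
      using b finite_R by (intro member_le_sum) auto
    also have "\<dots> \<le> real_of_int K" unfolding K_def by (rule le_of_int_ceiling)
    finally have "\<bar>m\<bar> \<le> K" by linarith
    then show "f \<in> (\<lambda>(b, m). aroot b m) ` (R \<times> {-K..K})" using b f by force
  qed
  then show ?thesis by (rule finite_subset) (use finite_R in auto)
qed

text \<open>Since no hyperplane meets the alcove, the choice of the reference point p in A does
  not matter.\<close>
lemma separating_indep:
  assumes "p \<in> A" "p' \<in> A" shows "separating p z = separating p' z"
proof -
  have "f z * f p < 0 \<longleftrightarrow> f z * f p' < 0" if "f = aroot b m" "b \<in> R" for f b m
    using aroot_sign_on_alcove[OF that(2) assms, of m] aroot_sign_on_alcove[OF that(2) assms(2,1), of m]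
      that(1) by (auto simp: mult_less_0_iff)
  then show ?thesis unfolding separating_def by blast
qed

text \<open>Composition with s_i carries the hyperplanes separating s_i z from p injectively to
  those separating z from s_i p.\<close>
lemma card_separating_sgen:
  assumes i: "i \<le> l"
  shows "card (separating p (s i z)) \<le> card (separating (s i p) z)"
proof -
  have inj: "inj_on (\<lambda>f. f \<circ> s i) (separating p (s i z))"
  proof (rule inj_onI)
    fix f g assume "f \<circ> s i = g \<circ> s i"
    then have "f (s i (s i y)) = g (s i (s i y))" for y by (metis comp_apply)
    then show "f = g" using sgen_sgen[OF i] by auto
  qed
  have sub1: "(\<lambda>f. f \<circ> s i) ` separating p (s i z) \<subseteq> separating (s i p) z"
  proof
    fix g assume "g \<in> (\<lambda>f. f \<circ> s i) ` separating p (s i z)"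
    then obtain b m where b: "b \<in> R" and g: "g = aroot b m \<circ> s i"
      and neg: "aroot b m (s i z) * aroot b m p < 0" by (auto simp: separating_def)
    obtain b' m' where "b' \<in> R" "\<forall>y. aroot b m (s i y) = aroot b' m' y"
      using aroot_sgen[OF i b] by blast
    moreover have "g z * g (s i p) < 0" using neg sgen_sgen[OF i] by (simp add: g)
    ultimately show "g \<in> separating (s i p) z" unfolding separating_def g by (auto simp: fun_eq_iff)
  qed
  have "card (separating p (s i z)) = card ((\<lambda>f. f \<circ> s i) ` separating p (s i z))"
    using card_image[OF inj] by simp
  also have "\<dots> \<le> card (separating (s i p) z)" using sub1 finite_separating by (intro card_mono) auto
  finally show ?thesis .
qed

text \<open>Reflecting a point z on the negative side of the i-th wall removes that wall from the
  separating set and otherwise only permutes hyperplanes (by f \<mapsto> f \<circ> s_i).\<close>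
lemma separating_decreases:
  assumes i: "i \<le> l" and z: "wall i z < 0"
  shows "\<exists>p\<in>A. card (separating p (s i z)) < card (separating p z)"
proof -
  obtain p where pA: "p \<in> A" and cross: "\<forall>b\<in>R. \<forall>m. (aroot b m p > 0) \<noteq> (aroot b m (s i p) > 0) \<longrightarrow>
           same_mirror b m (alpha i) (delta i)"
    using crossing_point[OF i] by blast
  have wp: "wall i p > 0" using pA i alcove_iff by blast
  have sub2: "separating (s i p) z \<subseteq> separating p z - {wall i}"
  proof
    fix f assume "f \<in> separating (s i p) z"
    then obtain b m where b: "b \<in> R" and f: "f = aroot b m" and neg: "f z * f (s i p) < 0"
      by (auto simp: separating_def)
    have "\<not> same_mirror b m (alpha i) (delta i)"
    proof
      assume "same_mirror b m (alpha i) (delta i)"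
      then have "f z * f (s i p) = wall i z * wall i (s i p)"
        unfolding f same_mirror_def by (auto simp: aroot_def algebra_simps)
      also have "\<dots> > 0" using z wp wall_sgen[OF i, of p] by (simp add: mult_neg_pos)
      finally show False using neg by simp
    qed
    then have same: "(f p > 0) = (f (s i p) > 0)" using cross b f by blast
    have "f p \<noteq> 0" using aroot_sign_on_alcove[OF b pA pA] f by simp
    then have "f z * f p < 0" using neg same by (auto simp: mult_less_0_iff)
    moreover have "f \<noteq> wall i" using neg z wp wall_sgen[OF i, of p] by (auto simp: mult_less_0_iff)
    ultimately show "f \<in> separating p z - {wall i}" using b f by (auto simp: separating_def)
  qed
  have mem: "wall i \<in> separating p z"
    using z wp alpha_in_R[OF i] by (auto simp: separating_def mult_neg_pos)
  have "card (separating p (s i z)) \<le> card (separating (s i p) z)" by (rule card_separating_sgen[OF i])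
  also have "\<dots> \<le> card (separating p z - {wall i})"
    using sub2 finite_separating by (intro card_mono) auto
  also have "\<dots> < card (separating p z)" by (rule card_Diff1_less[OF finite_separating mem])
  finally show ?thesis using pA by blast
qed

text \<open>Every point of V is the image of a point of the closed alcove: reflect in walls with
  negative value until none is left, which terminates since the separating set shrinks.\<close>
lemma fundamental_domain: "\<exists>ws x. set ws \<subseteq> {..l} \<and> x \<in> C \<and> z = wmap ws x"
proof -
  obtain p0 where p0: "p0 \<in> A" using alcove_nonempty by blast
  show ?thesis
  proof (induction "card (separating p0 z)" arbitrary: z rule: less_induct)
    case less
    show ?case
    proof (cases "z \<in> C")
      case True then show ?thesis by (intro exI[of _ "[]"] exI[of _ z]) auto
    next
      case False
      then obtain i where i: "i \<le> l" "wall i z < 0" by (auto simp: C_def not_le)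
      obtain p where p: "p \<in> A" "card (separating p (s i z)) < card (separating p z)"
        using separating_decreases[OF i] by blast
      then have "card (separating p0 (s i z)) < card (separating p0 z)"
        using separating_indep[OF p(1) p0] by simp
      then obtain ws x where ws: "set ws \<subseteq> {..l}" "x \<in> C" "s i z = wmap ws x" using less by blast
      have "wmap (i # ws) x = z" using ws(3)[symmetric] sgen_sgen[OF i(1), of z] by simp
      then show ?thesis using ws i by (intro exI[of _ "i # ws"] exI[of _ x]) auto
    qed
  qed
qed

section \<open>The folding map\<close>

definition fold_map :: "'a \<Rightarrow> 'a" where
  "fold_map z = (SOME x. x \<in> C \<and> (\<exists>ws. set ws \<subseteq> {..l} \<and> z = wmap ws x))"

lemma fold_map: "fold_map z \<in> C \<and> (\<exists>ws. set ws \<subseteq> {..l} \<and> z = wmap ws (fold_map z))"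
  unfolding fold_map_def by (rule someI_ex) (use fundamental_domain[of z] in blast)

text \<open>By the key inequality, folding does not increase distances.\<close>
lemma fold_map_nonexpansive: "dist (fold_map z) (fold_map z') \<le> dist z z'"
proof -
  obtain ws where ws: "set ws \<subseteq> {..l}" "z = wmap ws (fold_map z)" using fold_map by blast
  obtain ws' where ws': "set ws' \<subseteq> {..l}" "z' = wmap ws' (fold_map z')" using fold_map by blast
  have "dist (fold_map z) (fold_map z') \<le> dist (wmap (rev ws' @ ws) (fold_map z)) (fold_map z')"
    using key_inequality[of "rev ws' @ ws" "fold_map z" "fold_map z'"] ws(1) ws'(1)
      fold_map[THEN conjunct1] by auto
  also have "\<dots> = dist (wmap (rev ws') z) (wmap (rev ws') z')"
  proof -
    have "wmap (rev ws') z' = fold_map z'"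
      using wmap_rev[OF ws'(1), of "fold_map z'"] by (simp only: ws'(2)[symmetric])
    moreover have "wmap (rev ws' @ ws) (fold_map z) = wmap (rev ws') z"
      by (simp only: word_map_append comp_apply ws(2)[symmetric])
    ultimately show ?thesis by simp
  qed
  also have "\<dots> = dist z z'"
    by (rule affine_isometry_dist[OF wmap_isometry]) (use ws' in simp)
  finally show ?thesis .
qed

section \<open>The sets (S - w)(A)\<close>

text \<open>Disjointness: a common point would give x1, x2 in A with
  |x1 - x2| \<le> |w1 x1 - w2 x2| = |S (x1 - x2)| \<le> |S| |x1 - x2|, forcing x1 = x2, and then
  w2^-1 w1 would fix a point of the alcove.\<close>
lemma images_disjoint:
  assumes S: "linear S" "onorm S < 1"
    and w1: "w1 \<in> affine_weyl alpha l" and w2: "w2 \<in> affine_weyl alpha l" and ne: "w1 \<noteq> w2"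
  shows "((\<lambda>x. S x - w1 x) ` A) \<inter> ((\<lambda>x. S x - w2 x) ` A) = {}"
proof (rule ccontr)
  assume "((\<lambda>x. S x - w1 x) ` A) \<inter> ((\<lambda>x. S x - w2 x) ` A) \<noteq> {}"
  then obtain x1 x2 where x1: "x1 \<in> A" and x2: "x2 \<in> A" and eq: "S x1 - w1 x1 = S x2 - w2 x2"
    by auto
  obtain ws1 where ws1: "set ws1 \<subseteq> {..l}" "w1 = wmap ws1" using w1 affine_weyl_iff_word by blast
  obtain ws2 where ws2: "set ws2 \<subseteq> {..l}" "w2 = wmap ws2" using w2 affine_weyl_iff_word by blast
  define u where "u = rev ws2 @ ws1"
  have u: "set u \<subseteq> {..l}" using ws1 ws2 by (auto simp: u_def)
  have w2u: "w2 (wmap u y) = w1 y" for y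
    using wmap_rev'[OF ws2(1)] ws1 ws2 by (simp add: u_def word_map_append)
  have diff: "w1 x1 - w2 x2 = S x1 - S x2" using eq by (simp add: algebra_simps)
  have "dist x1 x2 \<le> dist (wmap u x1) x2" using key_inequality[OF u] x1 x2 alcove_subset_C by blast
  also have "\<dots> = dist (w2 (wmap u x1)) (w2 x2)"
    using affine_isometry_dist[OF wmap_isometry[OF ws2(1)]] ws2(2) by simp
  also have "\<dots> = dist (w1 x1) (w2 x2)" by (simp only: w2u)
  also have "\<dots> = dist (S x1) (S x2)" using diff by (simp add: dist_norm)
  also have "\<dots> \<le> onorm S * dist x1 x2" by (rule linear_onorm_dist[OF S(1)])
  finally have contr: "dist x1 x2 \<le> onorm S * dist x1 x2" .
  have "dist x1 x2 = 0"
  proof (rule ccontr)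
    assume "dist x1 x2 \<noteq> 0"
    then have "onorm S * dist x1 x2 < 1 * dist x1 x2" using S(2) by (intro mult_strict_right_mono) auto
    then show False using contr by simp
  qed
  then have "wmap ws1 x1 = wmap ws2 x1" using eq ws1(2) ws2(2) by simp
  then have "wmap u x1 = x1" using wmap_rev[OF ws2(1), of x1] by (simp add: u_def word_map_append)
  then have "wmap u = id" using stabilizer_trivial[OF u x1] x1 by simp
  then have "w1 = w2" using w2u by (metis id_apply ext)
  then show False using ne by simp
qed

text \<open>Covering: y = S x - w x with x in the closed alcove, obtained from the fixed point
  z = w x of the contraction z \<mapsto> S (fold z) - y.\<close>
lemma images_cover:
  assumes S: "linear S" "onorm S < 1"
  shows "y \<in> (\<Union>w\<in>affine_weyl alpha l. closure ((\<lambda>x. S x - w x) ` A))"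
proof -
  have lin: "bounded_linear S" using S(1) by (simp add: linear_conv_bounded_linear)
  define G where "G z = S (fold_map z) - y" for z
  have "\<exists>!z. G z = z"
  proof (rule banach_fix_type[OF onorm_pos_le[OF lin] S(2)], intro allI)
    fix z z'
    have "dist (G z) (G z') = dist (S (fold_map z)) (S (fold_map z'))"
      by (simp add: G_def dist_norm)
    also have "\<dots> \<le> onorm S * dist (fold_map z) (fold_map z')" by (rule linear_onorm_dist[OF S(1)])
    also have "\<dots> \<le> onorm S * dist z z'"
      using fold_map_nonexpansive onorm_pos_le[OF lin] by (intro mult_left_mono) auto
    finally show "dist (G z) (G z') \<le> onorm S * dist z z'" .
  qed
  then obtain z where z: "S (fold_map z) - y = z" unfolding G_def by blast
  define x0 where "x0 = fold_map z"
  obtain ws where ws: "set ws \<subseteq> {..l}" "z = wmap ws x0" using fold_map unfolding x0_def by blast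
  have "S x0 - y = z" unfolding x0_def by (rule z)
  then have y: "y = S x0 - wmap ws x0" using ws(2) by (simp add: algebra_simps)
  have x0: "x0 \<in> closure A" using fold_map closed_alcove_subset_closure unfolding x0_def by blast
  have "continuous_on (closure A) (\<lambda>x. S x - wmap ws x)"
    by (intro continuous_on_diff linear_continuous_on[OF lin]
        continuous_on_subset[OF affine_isometry_continuous[OF wmap_isometry[OF ws(1)]]]) auto
  then have "(\<lambda>x. S x - wmap ws x) ` closure A \<subseteq> closure ((\<lambda>x. S x - wmap ws x) ` A)"
    by (rule image_closure_subset[OF _ closed_closure closure_subset])
  then have "y \<in> closure ((\<lambda>x. S x - wmap ws x) ` A)" unfolding y using x0 by blast
  moreover have "wmap ws \<in> affine_weyl alpha l" using affine_weyl_iff_word ws(1) by blast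
  ultimately show ?thesis by blast
qed

end

theorem theorem3:
  fixes R :: "'a::euclidean_space set"
    and alpha :: "nat \<Rightarrow> 'a" and amax :: 'a and l :: nat
    and S :: "'a \<Rightarrow> 'a"
  assumes "root_system R" and "irreducible_rs R"
    and "l = DIM('a)"
    and "simple_roots R l alpha"
    and "highest_root R l alpha amax"
    and "alpha 0 = - amax"
    and "linear S" and "onorm S < 1"
  shows "(\<forall>w1\<in>affine_weyl alpha l. \<forall>w2\<in>affine_weyl alpha l. w1 \<noteq> w2 \<longrightarrow>
            ((\<lambda>x. S x - w1 x) ` alcove alpha l) \<inter> ((\<lambda>x. S x - w2 x) ` alcove alpha l) = {})
       \<and> UNIV = (\<Union>w\<in>affine_weyl alpha l. closure ((\<lambda>x. S x - w x) ` alcove alpha l))"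
proof -
  interpret alcove_setting R alpha amax l
    by unfold_locales (use assms in auto)
  show ?thesis
  proof
    show "\<forall>w1\<in>affine_weyl alpha l. \<forall>w2\<in>affine_weyl alpha l. w1 \<noteq> w2 \<longrightarrow>
        ((\<lambda>x. S x - w1 x) ` A) \<inter> ((\<lambda>x. S x - w2 x) ` A) = {}"
      using images_disjoint[OF assms(7,8)] by blast
    show "UNIV = (\<Union>w\<in>affine_weyl alpha l. closure ((\<lambda>x. S x - w x) ` A))"
      using images_cover[OF assms(7,8)] by blast
  qed
qed

end
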